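(* Let $\mathbf{m}=\{1,\dots,m\}$ for $m=2,3,4,5$. Suppose given: for each $m\in\{2,3,4,5\}$ a category $\mathcal{C}_{\mathbf m}$ with a functor $\otimes_{\mathbf m}:\mathcal{C}_{\mathbf m}\times\mathcal{C}_{\mathbf m}\to\mathcal{C}_{\mathbf m}$ and an associativity constraint $\alpha_{\mathbf m}$; and for each order-preserving injection $\lambda:\mathbf l\to\mathbf m$ with $l<m$, $m\in\{3,4,5\}$, a faithful functor $F_\lambda:\mathcal{C}_{\mathbf l}\to\mathcal{C}_{\mathbf m}$ that strictly respects the operations and associativity constraints (i.e. $F_\lambda(A\otimes B)=F_\lambda A\otimes F_\lambda B$, similarly on morphisms, and $F_\lambda(\alpha_{\mathbf l})=\alpha_{\mathbf m}$), such that $F_{\tau\circ\sigma}=F_\tau\circ F_\sigma$ whenever defined. For $1\le i<j\le m$ write $F_{ji}$ for $F_\lambda$ with $\lambda:\mathbf 2\to\mathbf m$, $\lambda(1)=i,\lambda(2)=j$. Let $P\in\mathcal{C}_{\mathbf 2}$ with an isomorphism $\theta:F_{32}(P)\otimes_{\mathbf 3}F_{21}(P)\to F_{31}(P)$ in $\mathcal{C}_{\mathbf 3}$; in any $\mathcal{C}_{\mathbf m}$ write $P_{ji}=F_{ji}(P)$ and $\theta_{kji}:P_{kj}\otimes P_{ji}\to P_{ki}$ ($i<j<k$) for the image of $\theta$ under the functor induced by the embedding $\mathbf 3\to\mathbf m$ with image $\{i,j,k\}$. Let $C$ be the automorphism of $P_{41}$ in $\mathcal{C}_{\mathbf 4}$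 defined by $$C=\theta_{431}\circ(\mathrm{id}_{P_{43}}\otimes\theta_{321})\circ\alpha_{\mathbf 4}\circ(\theta_{432}\otimes\mathrm{id}_{P_{21}})^{-1}\circ\theta_{421}^{-1}.$$ For a $4$-element subset $S=\{a<b<c<d\}\subseteq\mathbf 5$ let $C_S$ be the image of $C$ in $\mathcal{C}_{\mathbf 5}$ under the functor of the embedding $\mathbf 4\to\mathbf 5$ with image $S$ (an automorphism of $P_{da}$). Assume the analogue of the hypothesis of the idempotent theorem: the five automorphisms of $P_{51}$ $$C_{\{1,2,3,5\}},\; C_{\{1,2,4,5\}},\; C_{\{1,3,4,5\}},\; \theta_{521}\circ(C_{\{2,3,4,5\}}\otimes\mathrm{id}_{P_{21}})\circ\theta_{521}^{-1},\; \theta_{541}\circ(\mathrm{id}_{P_{54}}\otimes C_{\{1,2,3,4\}})\circ\theta_{541}^{-1}$$ all coincide. Then $C=\mathrm{id}_{P_{41}}$.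
   Context: An associativity constraint for a functor $\otimes$ on a category is a natural isomorphism $\alpha_{A,B,C}:(A\otimes B)\otimes C\to A\otimes(B\otimes C)$ satisfying the pentagon axiom $(\mathrm{id}_A\otimes\alpha_{B,C,D})\circ\alpha_{A,B\otimes C,D}\circ(\alpha_{A,B,C}\otimes\mathrm{id}_D)=\alpha_{A,B,C\otimes D}\circ\alpha_{A\otimes B,C,D}$. The pair $(P,\theta)$ is called an $F_\bullet$-idempotent, and $\theta$ is called compatible with $\alpha_\bullet$ if $C=\mathrm{id}$. *)

theory Defs
  imports Main
begin

record ('o, 'a) cat =
  Obj  :: "'o set"
  Arr  :: "'a set"
  Dom  :: "'a \<Rightarrow> 'o"
  Cod  :: "'a \<Rightarrow> 'o"
  Idt  :: "'o \<Rightarrow> 'a"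
  Comp :: "'a \<Rightarrow> 'a \<Rightarrow> 'a"   (* Comp C g f = g \<circ> f, meaningful when Cod f = Dom g *)

definition hom :: "('o, 'a) cat \<Rightarrow> 'o \<Rightarrow> 'o \<Rightarrow> 'a set" where
  "hom C A B = {f \<in> Arr C. Dom C f = A \<and> Cod C f = B}"

definition category :: "('o, 'a) cat \<Rightarrow> bool" where
  "category C \<longleftrightarrow>
     (\<forall>f\<in>Arr C. Dom C f \<in> Obj C \<and> Cod C f \<in> Obj C) \<and>
     (\<forall>A\<in>Obj C. Idt C A \<in> hom C A A) \<and>
     (\<forall>f\<in>Arr C. \<forall>g\<in>Arr C. Cod C f = Dom C g \<longrightarrow>
         Comp C g f \<in> hom C (Dom C f) (Cod C g)) \<and>
     (\<forall>f\<in>Arr C. Comp C (Idt C (Cod C f)) f = f \<and> Comp C f (Idt C (Dom C f)) = f) \<and>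
     (\<forall>f\<in>Arr C. \<forall>g\<in>Arr C. \<forall>h\<in>Arr C. Cod C f = Dom C g \<longrightarrow> Cod C g = Dom C h \<longrightarrow>
         Comp C h (Comp C g f) = Comp C (Comp C h g) f)"

definition is_inverse :: "('o, 'a) cat \<Rightarrow> 'a \<Rightarrow> 'a \<Rightarrow> bool" where
  "is_inverse C f g \<longleftrightarrow> f \<in> Arr C \<and> g \<in> hom C (Cod C f) (Dom C f) \<and>
     Comp C g f = Idt C (Dom C f) \<and> Comp C f g = Idt C (Cod C f)"

definition iso :: "('o, 'a) cat \<Rightarrow> 'a \<Rightarrow> bool" where
  "iso C f \<longleftrightarrow> (\<exists>g. is_inverse C f g)"

definition inverse_arr :: "('o, 'a) cat \<Rightarrow> 'a \<Rightarrow> 'a" where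
  "inverse_arr C f = (THE g. is_inverse C f g)"

definition "functor" :: "('o, 'a) cat \<Rightarrow> ('o, 'a) cat \<Rightarrow> ('o \<Rightarrow> 'o) \<Rightarrow> ('a \<Rightarrow> 'a) \<Rightarrow> bool" where
  "functor C D Fo Fa \<longleftrightarrow>
     (\<forall>A\<in>Obj C. Fo A \<in> Obj D) \<and>
     (\<forall>f\<in>Arr C. Fa f \<in> hom D (Fo (Dom C f)) (Fo (Cod C f))) \<and>
     (\<forall>A\<in>Obj C. Fa (Idt C A) = Idt D (Fo A)) \<and>
     (\<forall>f\<in>Arr C. \<forall>g\<in>Arr C. Cod C f = Dom C g \<longrightarrow> Fa (Comp C g f) = Comp D (Fa g) (Fa f))"

definition faithful :: "('o, 'a) cat \<Rightarrow> ('a \<Rightarrow> 'a) \<Rightarrow> bool" where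
  "faithful C Fa \<longleftrightarrow>
     (\<forall>f\<in>Arr C. \<forall>g\<in>Arr C. Dom C f = Dom C g \<longrightarrow> Cod C f = Cod C g \<longrightarrow> Fa f = Fa g \<longrightarrow> f = g)"

text \<open>A functor \<open>\<otimes> : C \<times> C \<rightarrow> C\<close>, given by its object part \<open>T\<close> and arrow part \<open>TA\<close>.\<close>
definition bifunctor :: "('o, 'a) cat \<Rightarrow> ('o \<Rightarrow> 'o \<Rightarrow> 'o) \<Rightarrow> ('a \<Rightarrow> 'a \<Rightarrow> 'a) \<Rightarrow> bool" where
  "bifunctor C T TA \<longleftrightarrow>
     (\<forall>A\<in>Obj C. \<forall>B\<in>Obj C. T A B \<in> Obj C) \<and>
     (\<forall>f\<in>Arr C. \<forall>g\<in>Arr C. TA f g \<in> hom C (T (Dom C f) (Dom C g)) (T (Cod C f) (Cod C g))) \<and>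
     (\<forall>A\<in>Obj C. \<forall>B\<in>Obj C. TA (Idt C A) (Idt C B) = Idt C (T A B)) \<and>
     (\<forall>f\<in>Arr C. \<forall>f'\<in>Arr C. \<forall>g\<in>Arr C. \<forall>g'\<in>Arr C.
        Cod C f = Dom C f' \<longrightarrow> Cod C g = Dom C g' \<longrightarrow>
        TA (Comp C f' f) (Comp C g' g) = Comp C (TA f' g') (TA f g))"

definition assoc_constraint ::
  "('o, 'a) cat \<Rightarrow> ('o \<Rightarrow> 'o \<Rightarrow> 'o) \<Rightarrow> ('a \<Rightarrow> 'a \<Rightarrow> 'a) \<Rightarrow> ('o \<Rightarrow> 'o \<Rightarrow> 'o \<Rightarrow> 'a) \<Rightarrow> bool" where
  "assoc_constraint C T TA \<alpha> \<longleftrightarrow>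
     (\<forall>A\<in>Obj C. \<forall>B\<in>Obj C. \<forall>D\<in>Obj C.
        \<alpha> A B D \<in> hom C (T (T A B) D) (T A (T B D)) \<and> iso C (\<alpha> A B D)) \<and>
     (\<forall>f\<in>Arr C. \<forall>g\<in>Arr C. \<forall>h\<in>Arr C.
        Comp C (\<alpha> (Cod C f) (Cod C g) (Cod C h)) (TA (TA f g) h) =
        Comp C (TA f (TA g h)) (\<alpha> (Dom C f) (Dom C g) (Dom C h))) \<and>
     (\<forall>A\<in>Obj C. \<forall>B\<in>Obj C. \<forall>D\<in>Obj C. \<forall>E\<in>Obj C.
        Comp C (TA (Idt C A) (\<alpha> B D E))
          (Comp C (\<alpha> A (T B D) E) (TA (\<alpha> A B D) (Idt C E))) =
        Comp C (\<alpha> A B (T D E)) (\<alpha> (T A B) D E))"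

definition strict_monoidal ::
  "('o, 'a) cat \<Rightarrow> ('o \<Rightarrow> 'o \<Rightarrow> 'o) \<Rightarrow> ('a \<Rightarrow> 'a \<Rightarrow> 'a) \<Rightarrow> ('o \<Rightarrow> 'o \<Rightarrow> 'o \<Rightarrow> 'a) \<Rightarrow>
   ('o \<Rightarrow> 'o \<Rightarrow> 'o) \<Rightarrow> ('a \<Rightarrow> 'a \<Rightarrow> 'a) \<Rightarrow> ('o \<Rightarrow> 'o \<Rightarrow> 'o \<Rightarrow> 'a) \<Rightarrow>
   ('o \<Rightarrow> 'o) \<Rightarrow> ('a \<Rightarrow> 'a) \<Rightarrow> bool" where
  "strict_monoidal C T TA \<alpha> T' TA' \<alpha>' Fo Fa \<longleftrightarrow>
     (\<forall>A\<in>Obj C. \<forall>B\<in>Obj C. Fo (T A B) = T' (Fo A) (Fo B)) \<and>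
     (\<forall>f\<in>Arr C. \<forall>g\<in>Arr C. Fa (TA f g) = TA' (Fa f) (Fa g)) \<and>
     (\<forall>A\<in>Obj C. \<forall>B\<in>Obj C. \<forall>D\<in>Obj C. Fa (\<alpha> A B D) = \<alpha>' (Fo A) (Fo B) (Fo D))"

text \<open>An order-preserving injection \<open>\<lambda> : {1..l} \<rightarrow> {1..m}\<close> is identified with its image
  \<open>S \<subseteq> {1..m}\<close> (with \<open>l = card S\<close>); \<open>ord_emb S\<close> is the corresponding map.\<close>
definition ord_emb :: "nat set \<Rightarrow> nat \<Rightarrow> nat" where
  "ord_emb S i = sorted_list_of_set S ! (i - 1)"

record ('o, 'a) sys =
  Cat  :: "nat \<Rightarrow> ('o, 'a) cat"
  Ten  :: "nat \<Rightarrow> 'o \<Rightarrow> 'o \<Rightarrow> 'o"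
  TenA :: "nat \<Rightarrow> 'a \<Rightarrow> 'a \<Rightarrow> 'a"
  Alpha :: "nat \<Rightarrow> 'o \<Rightarrow> 'o \<Rightarrow> 'o \<Rightarrow> 'a"
  FO   :: "nat \<Rightarrow> nat set \<Rightarrow> 'o \<Rightarrow> 'o"          (* FO m S : object part of F_\<lambda>, im \<lambda> = S \<subseteq> {1..m} *)
  FA   :: "nat \<Rightarrow> nat set \<Rightarrow> 'a \<Rightarrow> 'a"

definition valid_emb :: "nat \<Rightarrow> nat set \<Rightarrow> bool" where
  "valid_emb m S \<longleftrightarrow> S \<subseteq> {1..m} \<and> 2 \<le> card S \<and> card S < m"

definition sys_axioms :: "('o, 'a) sys \<Rightarrow> bool" where
  "sys_axioms \<Sigma> \<longleftrightarrow>
     (\<forall>m\<in>{2..5}. category (Cat \<Sigma> m) \<and> bifunctor (Cat \<Sigma> m) (Ten \<Sigma> m) (TenA \<Sigma> m) \<and>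
        assoc_constraint (Cat \<Sigma> m) (Ten \<Sigma> m) (TenA \<Sigma> m) (Alpha \<Sigma> m)) \<and>
     (\<forall>m\<in>{3..5}. \<forall>S. valid_emb m S \<longrightarrow>
        functor (Cat \<Sigma> (card S)) (Cat \<Sigma> m) (FO \<Sigma> m S) (FA \<Sigma> m S) \<and>
        faithful (Cat \<Sigma> (card S)) (FA \<Sigma> m S) \<and>
        strict_monoidal (Cat \<Sigma> (card S)) (Ten \<Sigma> (card S)) (TenA \<Sigma> (card S)) (Alpha \<Sigma> (card S))
          (Ten \<Sigma> m) (TenA \<Sigma> m) (Alpha \<Sigma> m) (FO \<Sigma> m S) (FA \<Sigma> m S)) \<and>
     (\<forall>m\<in>{3..5}. \<forall>S T. valid_emb m T \<longrightarrow> valid_emb (card T) S \<longrightarrow>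
        (\<forall>A\<in>Obj (Cat \<Sigma> (card S)).
           FO \<Sigma> m (ord_emb T ` S) A = FO \<Sigma> m T (FO \<Sigma> (card T) S A)) \<and>
        (\<forall>f\<in>Arr (Cat \<Sigma> (card S)).
           FA \<Sigma> m (ord_emb T ` S) f = FA \<Sigma> m T (FA \<Sigma> (card T) S f)))"

definition Pobj :: "('o, 'a) sys \<Rightarrow> 'o \<Rightarrow> nat \<Rightarrow> nat \<Rightarrow> nat \<Rightarrow> 'o" where
  "Pobj \<Sigma> P m j i = FO \<Sigma> m {i, j} P"

definition thm_img :: "('o, 'a) sys \<Rightarrow> 'a \<Rightarrow> nat \<Rightarrow> nat \<Rightarrow> nat \<Rightarrow> nat \<Rightarrow> 'a" where
  "thm_img \<Sigma> \<theta> m k j i = FA \<Sigma> m {i, j, k} \<theta>"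

definition Cmor :: "('o, 'a) sys \<Rightarrow> 'o \<Rightarrow> 'a \<Rightarrow> 'a" where
  "Cmor \<Sigma> P \<theta> =
    (let C4 = Cat \<Sigma> 4; c = Comp C4; t = TenA \<Sigma> 4; th = thm_img \<Sigma> \<theta> 4; p = Pobj \<Sigma> P 4 in
     c (th 4 3 1)
      (c (t (Idt C4 (p 4 3)) (th 3 2 1))
       (c (Alpha \<Sigma> 4 (p 4 3) (p 3 2) (p 2 1))
        (c (inverse_arr C4 (t (th 4 3 2) (Idt C4 (p 2 1))))
           (inverse_arr C4 (th 4 2 1))))))"

end

theory Submission
  imports Defs
begin

(* The automorphism C of P_41 is the "coherence defect" of theta on the indices 1 < 2 < 3 < 4:
   the correction needed to make the square built from theta_431, theta_321, alpha, theta_432 and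
   theta_421 commute.

   1. Inside a single monoidal category, a family of isomorphisms t k j i : q k j (x) q j i -> q k i
      has a defect  defect a b c d  for every four indices a < b < c < d.  Walking around the
      pentagon of alpha for five indices a < b < c < d < e gives the pentagon relation
        defect a c d e . defect a b c e = E5 . defect a b d e . E4,
      where E4 and E5 are defect b c d e and defect a b c d whiskered and conjugated by t e b a and
      t e d a.  If all five automorphisms coincide, their common value X satisfies X.X = X.X.X, so X
      is an idempotent automorphism, i.e. an identity.
   2. In the given system, P_ji and theta_kji form such a family in C_4 and in C_5; C is the
      defect on 1 < 2 < 3 < 4 in C_4, and its image C_S under the strict monoidal embedding with
      image S is the defect on S in C_5.  The hypothesis is exactly the coincidence of the five
      automorphisms for 1 < 2 < 3 < 4 < 5, so C_{1,2,3,5} is trivial, and by faithfulness so is C. *)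

section \<open>Categories\<close>

locale category_ctx =
  fixes C :: "('o, 'a) cat"
  assumes cat: "category C"
begin

lemma dom_obj [simp]: "f \<in> Arr C \<Longrightarrow> Dom C f \<in> Obj C"
  using cat unfolding category_def by blast

lemma cod_obj [simp]: "f \<in> Arr C \<Longrightarrow> Cod C f \<in> Obj C"
  using cat unfolding category_def by blast

lemma idt_arr [simp]: "A \<in> Obj C \<Longrightarrow> Idt C A \<in> Arr C"
  using cat unfolding category_def hom_def by blast

lemma idt_dom [simp]: "A \<in> Obj C \<Longrightarrow> Dom C (Idt C A) = A"
  using cat unfolding category_def hom_def by blast

lemma idt_cod [simp]: "A \<in> Obj C \<Longrightarrow> Cod C (Idt C A) = A"
  using cat unfolding category_def hom_def by blast

lemma comp_arr [simp]:
  "f \<in> Arr C \<Longrightarrow> g \<in> Arr C \<Longrightarrow> Cod C f = Dom C g \<Longrightarrow> Comp C g f \<in> Arr C"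
  using cat unfolding category_def hom_def by blast

lemma comp_dom [simp]:
  "f \<in> Arr C \<Longrightarrow> g \<in> Arr C \<Longrightarrow> Cod C f = Dom C g \<Longrightarrow> Dom C (Comp C g f) = Dom C f"
  using cat unfolding category_def hom_def by blast

lemma comp_cod [simp]:
  "f \<in> Arr C \<Longrightarrow> g \<in> Arr C \<Longrightarrow> Cod C f = Dom C g \<Longrightarrow> Cod C (Comp C g f) = Cod C g"
  using cat unfolding category_def hom_def by blast

text \<open>Composites are normalised to right-nested form.\<close>
lemma comp_assoc [simp]:
  "f \<in> Arr C \<Longrightarrow> g \<in> Arr C \<Longrightarrow> h \<in> Arr C \<Longrightarrow> Cod C f = Dom C g \<Longrightarrow> Cod C g = Dom C h \<Longrightarrow>
   Comp C (Comp C h g) f = Comp C h (Comp C g f)"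
  using cat unfolding category_def by metis

lemma comp_idt_left [simp]: "f \<in> Arr C \<Longrightarrow> Cod C f = A \<Longrightarrow> Comp C (Idt C A) f = f"
  using cat unfolding category_def by blast

lemma comp_idt_right [simp]: "f \<in> Arr C \<Longrightarrow> Dom C f = A \<Longrightarrow> Comp C f (Idt C A) = f"
  using cat unfolding category_def by blast

lemma inverse_unique:
  assumes g: "is_inverse C f g" and g': "is_inverse C f g'"
  shows "g = g'"
proof -
  have f: "f \<in> Arr C" using g by (simp add: is_inverse_def)
  have tg: "g \<in> Arr C" "Dom C g = Cod C f" "Cod C g = Dom C f"
    using g by (auto simp: is_inverse_def hom_def)
  have tg': "g' \<in> Arr C" "Dom C g' = Cod C f" "Cod C g' = Dom C f"
    using g' by (auto simp: is_inverse_def hom_def)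
  have "g = Comp C g (Comp C f g')" using g' tg by (simp add: is_inverse_def)
  also have "\<dots> = Comp C (Comp C g f) g'" using f tg tg' by simp
  also have "\<dots> = g'" using g tg' by (simp add: is_inverse_def)
  finally show ?thesis .
qed

lemma inverse_arr_is_inverse: "iso C f \<Longrightarrow> is_inverse C f (inverse_arr C f)"
  unfolding iso_def inverse_arr_def by (metis inverse_unique theI)

lemma iso_arr: "iso C f \<Longrightarrow> f \<in> Arr C"
  unfolding iso_def is_inverse_def by blast

lemma inv_arr [simp]: "iso C f \<Longrightarrow> inverse_arr C f \<in> Arr C"
  using inverse_arr_is_inverse unfolding is_inverse_def hom_def by blast

lemma inv_dom [simp]: "iso C f \<Longrightarrow> Dom C (inverse_arr C f) = Cod C f"
  using inverse_arr_is_inverse unfolding is_inverse_def hom_def by blast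

lemma inv_cod [simp]: "iso C f \<Longrightarrow> Cod C (inverse_arr C f) = Dom C f"
  using inverse_arr_is_inverse unfolding is_inverse_def hom_def by blast

lemma inv_comp_left [simp]: "iso C f \<Longrightarrow> Comp C (inverse_arr C f) f = Idt C (Dom C f)"
  using inverse_arr_is_inverse unfolding is_inverse_def by blast

lemma inv_comp_right [simp]: "iso C f \<Longrightarrow> Comp C f (inverse_arr C f) = Idt C (Cod C f)"
  using inverse_arr_is_inverse unfolding is_inverse_def by blast

text \<open>The two cancellation laws in right-nested form, as needed by the simplifier.\<close>
lemma inv_comp_left_tail:
  "iso C f \<Longrightarrow> k \<in> Arr C \<Longrightarrow> Cod C k = Dom C f \<Longrightarrow> Comp C (inverse_arr C f) (Comp C f k) = k"
  using iso_arr[of f] comp_assoc[of k f "inverse_arr C f"] by simp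

lemma inv_comp_right_tail:
  "iso C f \<Longrightarrow> k \<in> Arr C \<Longrightarrow> Cod C k = Cod C f \<Longrightarrow> Comp C f (Comp C (inverse_arr C f) k) = k"
  using iso_arr[of f] comp_assoc[of k "inverse_arr C f" f] by simp

lemma cancel_left:
  "iso C f \<Longrightarrow> g \<in> Arr C \<Longrightarrow> h \<in> Arr C \<Longrightarrow> Cod C g = Dom C f \<Longrightarrow> Cod C h = Dom C f \<Longrightarrow>
   Comp C f g = Comp C f h \<Longrightarrow> g = h"
  by (metis inv_comp_left_tail)

lemma cancel_right:
  assumes f: "iso C f" and gh: "g \<in> Arr C" "h \<in> Arr C" "Dom C g = Cod C f" "Dom C h = Cod C f"
    and eq: "Comp C g f = Comp C h f"
  shows "g = h"
proof -
  have "g = Comp C (Comp C g f) (inverse_arr C f)" using f gh iso_arr[OF f] by simp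
  also have "\<dots> = Comp C (Comp C h f) (inverse_arr C f)" using eq by simp
  also have "\<dots> = h" using f gh iso_arr[OF f] by simp
  finally show ?thesis .
qed

lemma iso_comp:
  assumes f: "iso C f" and g: "iso C g" and fg: "Cod C f = Dom C g"
  shows "iso C (Comp C g f)"
proof -
  have "is_inverse C (Comp C g f) (Comp C (inverse_arr C f) (inverse_arr C g))"
    using f g fg iso_arr[OF f] iso_arr[OF g]
    by (simp add: is_inverse_def hom_def inv_comp_left_tail inv_comp_right_tail)
  then show ?thesis unfolding iso_def by blast
qed

lemma iso_inv: assumes f: "iso C f" shows "iso C (inverse_arr C f)"
proof -
  have "is_inverse C (inverse_arr C f) f"
    using f iso_arr[OF f] by (simp add: is_inverse_def hom_def)
  then show ?thesis unfolding iso_def by blast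
qed

lemma iso_idt: "A \<in> Obj C \<Longrightarrow> iso C (Idt C A)"
  unfolding iso_def by (rule exI[of _ "Idt C A"]) (simp add: is_inverse_def hom_def)

lemma idempotent_iso_is_idt:
  assumes f: "iso C f" and endo: "Dom C f = Cod C f" and idem: "Comp C f f = f"
  shows "f = Idt C (Dom C f)"
proof (rule cancel_left[OF f])
  show "Comp C f f = Comp C f (Idt C (Dom C f))" using idem iso_arr[OF f] by simp
qed (use endo iso_arr[OF f] in simp_all)

end

text \<open>Rewriting \<open>L\<close> to \<open>R\<close> inside a context: used to replace a factor of a long composite,
  the two side conditions being the re-bracketings, which the simplifier performs.\<close>
lemma rewrite_in_context: "L = R \<Longrightarrow> A = ctx L \<Longrightarrow> B = ctx R \<Longrightarrow> A = B"
  by simp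

section \<open>Monoidal structure\<close>

locale monoidal_ctx = category_ctx C for C :: "('o, 'a) cat" +
  fixes T :: "'o \<Rightarrow> 'o \<Rightarrow> 'o" and TA :: "'a \<Rightarrow> 'a \<Rightarrow> 'a" and al :: "'o \<Rightarrow> 'o \<Rightarrow> 'o \<Rightarrow> 'a"
  assumes bif: "bifunctor C T TA" and ac: "assoc_constraint C T TA al"
begin

abbreviation cc (infixr "\<cdot>" 55) where "g \<cdot> f \<equiv> Comp C g f"
abbreviation tt (infixr "\<odot>" 60) where "f \<odot> g \<equiv> TA f g"
abbreviation II ("\<I>") where "\<I> A \<equiv> Idt C A"

lemma T_obj [simp]: "A \<in> Obj C \<Longrightarrow> B \<in> Obj C \<Longrightarrow> T A B \<in> Obj C"
  using bif unfolding bifunctor_def by blast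

lemma ten_arr [simp]: "f \<in> Arr C \<Longrightarrow> g \<in> Arr C \<Longrightarrow> f \<odot> g \<in> Arr C"
  using bif unfolding bifunctor_def hom_def by blast

lemma ten_dom [simp]: "f \<in> Arr C \<Longrightarrow> g \<in> Arr C \<Longrightarrow> Dom C (f \<odot> g) = T (Dom C f) (Dom C g)"
  using bif unfolding bifunctor_def hom_def by blast

lemma ten_cod [simp]: "f \<in> Arr C \<Longrightarrow> g \<in> Arr C \<Longrightarrow> Cod C (f \<odot> g) = T (Cod C f) (Cod C g)"
  using bif unfolding bifunctor_def hom_def by blast

lemma ten_idt: "A \<in> Obj C \<Longrightarrow> B \<in> Obj C \<Longrightarrow> \<I> A \<odot> \<I> B = \<I> (T A B)"
  using bif unfolding bifunctor_def by blast

lemma ten_comp: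
  "f \<in> Arr C \<Longrightarrow> f' \<in> Arr C \<Longrightarrow> g \<in> Arr C \<Longrightarrow> g' \<in> Arr C \<Longrightarrow>
   Cod C f = Dom C f' \<Longrightarrow> Cod C g = Dom C g' \<Longrightarrow> (f' \<cdot> f) \<odot> (g' \<cdot> g) = (f' \<odot> g') \<cdot> (f \<odot> g)"
  using bif unfolding bifunctor_def by blast

lemma al_arr [simp]: "A \<in> Obj C \<Longrightarrow> B \<in> Obj C \<Longrightarrow> D \<in> Obj C \<Longrightarrow> al A B D \<in> Arr C"
  using ac unfolding assoc_constraint_def hom_def by blast

lemma al_dom [simp]: "A \<in> Obj C \<Longrightarrow> B \<in> Obj C \<Longrightarrow> D \<in> Obj C \<Longrightarrow> Dom C (al A B D) = T (T A B) D"
  using ac unfolding assoc_constraint_def hom_def by blast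

lemma al_cod [simp]: "A \<in> Obj C \<Longrightarrow> B \<in> Obj C \<Longrightarrow> D \<in> Obj C \<Longrightarrow> Cod C (al A B D) = T A (T B D)"
  using ac unfolding assoc_constraint_def hom_def by blast

lemma al_iso: "A \<in> Obj C \<Longrightarrow> B \<in> Obj C \<Longrightarrow> D \<in> Obj C \<Longrightarrow> iso C (al A B D)"
  using ac unfolding assoc_constraint_def by blast

lemma al_natural:
  "f \<in> Arr C \<Longrightarrow> g \<in> Arr C \<Longrightarrow> h \<in> Arr C \<Longrightarrow>
   al (Cod C f) (Cod C g) (Cod C h) \<cdot> ((f \<odot> g) \<odot> h) = (f \<odot> (g \<odot> h)) \<cdot> al (Dom C f) (Dom C g) (Dom C h)"
  using ac unfolding assoc_constraint_def by blast

lemma pentagon: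
  "A \<in> Obj C \<Longrightarrow> B \<in> Obj C \<Longrightarrow> D \<in> Obj C \<Longrightarrow> E \<in> Obj C \<Longrightarrow>
   (\<I> A \<odot> al B D E) \<cdot> al A (T B D) E \<cdot> (al A B D \<odot> \<I> E) = al A B (T D E) \<cdot> al (T A B) D E"
  using ac unfolding assoc_constraint_def by blast

lemma iso_ten:
  assumes f: "iso C f" and g: "iso C g"
  shows "iso C (f \<odot> g)"
proof -
  have "is_inverse C (f \<odot> g) (inverse_arr C f \<odot> inverse_arr C g)"
    using f g iso_arr[OF f] iso_arr[OF g] by (simp add: is_inverse_def hom_def ten_comp[symmetric] ten_idt)
  then show ?thesis unfolding iso_def by blast
qed

lemma interchange:
  assumes f: "f \<in> Arr C" and g: "g \<in> Arr C"
  shows "(\<I> (Cod C f) \<odot> g) \<cdot> (f \<odot> \<I> (Dom C g)) = (f \<odot> \<I> (Cod C g)) \<cdot> (\<I> (Dom C f) \<odot> g)"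
proof -
  have "(\<I> (Cod C f) \<odot> g) \<cdot> (f \<odot> \<I> (Dom C g)) = (\<I> (Cod C f) \<cdot> f) \<odot> (g \<cdot> \<I> (Dom C g))"
    using f g by (intro ten_comp[symmetric]) simp_all
  also have "\<dots> = (f \<cdot> \<I> (Dom C f)) \<odot> (\<I> (Cod C g) \<cdot> g)" using f g by simp
  also have "\<dots> = (f \<odot> \<I> (Cod C g)) \<cdot> (\<I> (Dom C f) \<odot> g)"
    using f g by (intro ten_comp) simp_all
  finally show ?thesis .
qed

lemma whisker_left_comp3:
  "A \<in> Obj C \<Longrightarrow> f \<in> Arr C \<Longrightarrow> g \<in> Arr C \<Longrightarrow> h \<in> Arr C \<Longrightarrow> Cod C f = Dom C g \<Longrightarrow> Cod C g = Dom C h \<Longrightarrow>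
   \<I> A \<odot> (h \<cdot> g \<cdot> f) = (\<I> A \<odot> h) \<cdot> (\<I> A \<odot> g) \<cdot> (\<I> A \<odot> f)"
  using ten_comp[of "\<I> A" "\<I> A" "g \<cdot> f" h] ten_comp[of "\<I> A" "\<I> A" f g] by simp

lemma whisker_right_comp3:
  "A \<in> Obj C \<Longrightarrow> f \<in> Arr C \<Longrightarrow> g \<in> Arr C \<Longrightarrow> h \<in> Arr C \<Longrightarrow> Cod C f = Dom C g \<Longrightarrow> Cod C g = Dom C h \<Longrightarrow>
   (h \<cdot> g \<cdot> f) \<odot> \<I> A = (h \<odot> \<I> A) \<cdot> (g \<odot> \<I> A) \<cdot> (f \<odot> \<I> A)"
  using ten_comp[of "g \<cdot> f" h "\<I> A" "\<I> A"] ten_comp[of f g "\<I> A" "\<I> A"] by simp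

end

section \<open>Families of isomorphisms \<open>\<theta>\<^sub>k\<^sub>j\<^sub>i\<close> and their coherence defects\<close>

text \<open>This is the data \<open>P\<^sub>j\<^sub>i, \<theta>\<^sub>k\<^sub>j\<^sub>i\<close> of the theorem, seen inside a single category \<open>\<C>\<^sub>m\<close>.\<close>

locale theta_family = monoidal_ctx C T TA al
  for C :: "('o, 'a) cat" and T TA al +
  fixes n :: nat and q :: "nat \<Rightarrow> nat \<Rightarrow> 'o" and t :: "nat \<Rightarrow> nat \<Rightarrow> nat \<Rightarrow> 'a"
  assumes q_obj [simp]: "0 < i \<Longrightarrow> i < j \<Longrightarrow> j \<le> n \<Longrightarrow> q j i \<in> Obj C"
    and t_hom: "0 < i \<Longrightarrow> i < j \<Longrightarrow> j < k \<Longrightarrow> k \<le> n \<Longrightarrow> t k j i \<in> hom C (T (q k j) (q j i)) (q k i)"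
    and t_iso [simp]: "0 < i \<Longrightarrow> i < j \<Longrightarrow> j < k \<Longrightarrow> k \<le> n \<Longrightarrow> iso C (t k j i)"
begin

lemma t_arr [simp]: "0 < i \<Longrightarrow> i < j \<Longrightarrow> j < k \<Longrightarrow> k \<le> n \<Longrightarrow> t k j i \<in> Arr C"
  using t_hom by (simp add: hom_def)

lemma t_dom [simp]: "0 < i \<Longrightarrow> i < j \<Longrightarrow> j < k \<Longrightarrow> k \<le> n \<Longrightarrow> Dom C (t k j i) = T (q k j) (q j i)"
  using t_hom by (simp add: hom_def)

lemma t_cod [simp]: "0 < i \<Longrightarrow> i < j \<Longrightarrow> j < k \<Longrightarrow> k \<le> n \<Longrightarrow> Cod C (t k j i) = q k i"
  using t_hom by (simp add: hom_def)

text \<open>The defect of \<open>t\<close> on four indices \<open>a < b < c < d\<close>: the automorphism of \<open>q d a\<close> measuring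
  how far the two ways of building \<open>q d c \<otimes> q c b \<otimes> q b a \<rightarrow> q d a\<close> from \<open>t\<close> disagree
  (the morphism \<open>C\<close> of the theorem is the defect on \<open>1 < 2 < 3 < 4\<close>).\<close>
definition defect :: "nat \<Rightarrow> nat \<Rightarrow> nat \<Rightarrow> nat \<Rightarrow> 'a" where
  "defect a b c d = t d c a \<cdot> (\<I> (q d c) \<odot> t c b a) \<cdot> al (q d c) (q c b) (q b a)
     \<cdot> inverse_arr C (t d c b \<odot> \<I> (q b a)) \<cdot> inverse_arr C (t d b a)"

lemma defect_typing [simp]:
  assumes idx: "0 < a" "a < b" "b < c" "c < d" "d \<le> n"
  shows "defect a b c d \<in> Arr C" "Dom C (defect a b c d) = q d a" "Cod C (defect a b c d) = q d a"
  using idx iso_ten[of "t d c b" "\<I> (q b a)"] by (simp_all add: defect_def iso_idt)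

lemma defect_iso [simp]:
  assumes idx: "0 < a" "a < b" "b < c" "c < d" "d \<le> n"
  shows "iso C (defect a b c d)"
  using idx iso_ten[of "t d c b" "\<I> (q b a)"]
  by (simp add: defect_def iso_comp iso_ten iso_idt iso_inv al_iso)

lemma defect_relation:
  assumes idx: "0 < a" "a < b" "b < c" "c < d" "d \<le> n"
  shows "t d c a \<cdot> (\<I> (q d c) \<odot> t c b a) \<cdot> al (q d c) (q c b) (q b a)
     = defect a b c d \<cdot> t d b a \<cdot> (t d c b \<odot> \<I> (q b a))"
  using idx iso_ten[of "t d c b" "\<I> (q b a)"] by (simp add: defect_def iso_idt inv_comp_left_tail)

lemma defect_relation_whisker_left:
  assumes idx: "0 < a" "a < b" "b < c" "c < d" "d \<le> n" and X: "X \<in> Obj C"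
  shows "(\<I> X \<odot> t d c a) \<cdot> (\<I> X \<odot> (\<I> (q d c) \<odot> t c b a)) \<cdot> (\<I> X \<odot> al (q d c) (q c b) (q b a))
     = (\<I> X \<odot> defect a b c d) \<cdot> (\<I> X \<odot> t d b a) \<cdot> (\<I> X \<odot> (t d c b \<odot> \<I> (q b a)))"
  using whisker_left_comp3[of X "al (q d c) (q c b) (q b a)" "\<I> (q d c) \<odot> t c b a" "t d c a"]
    whisker_left_comp3[of X "t d c b \<odot> \<I> (q b a)" "t d b a" "defect a b c d"]
    defect_relation[OF idx] idx X by simp

lemma defect_relation_whisker_right:
  assumes idx: "0 < a" "a < b" "b < c" "c < d" "d \<le> n" and X: "X \<in> Obj C"
  shows "(t d c a \<odot> \<I> X) \<cdot> ((\<I> (q d c) \<odot> t c b a) \<odot> \<I> X) \<cdot> (al (q d c) (q c b) (q b a) \<odot> \<I> X)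
     = (defect a b c d \<odot> \<I> X) \<cdot> (t d b a \<odot> \<I> X) \<cdot> ((t d c b \<odot> \<I> (q b a)) \<odot> \<I> X)"
  using whisker_right_comp3[of X "al (q d c) (q c b) (q b a)" "\<I> (q d c) \<odot> t c b a" "t d c a"]
    whisker_right_comp3[of X "t d c b \<odot> \<I> (q b a)" "t d b a" "defect a b c d"]
    defect_relation[OF idx] idx X by simp

text \<open>For five indices \<open>a < b < c < d < e\<close> we compare two paths from
  \<open>((q e d \<otimes> q d c) \<otimes> q c b) \<otimes> q b a\<close> to \<open>q e a\<close> around the pentagon of \<open>al\<close>.  Along the upper
  path the defects on \<open>{a,b,c,e}\<close>, \<open>{a,c,d,e}\<close> and \<open>{a,b,c,d}\<close> appear, using naturality of
  \<open>al\<close>, the interchange law and the pentagon axiom.\<close>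
lemma pentagon_upper_path:
  assumes idx: "0 < a" "a < b" "b < c" "c < d" "d < e" "e \<le> n"
  shows "defect a c d e \<cdot> defect a b c e \<cdot> t e b a \<cdot> (t e c b \<odot> \<I> (q b a)) \<cdot> ((t e d c \<odot> \<I> (q c b)) \<odot> \<I> (q b a))
       = t e d a \<cdot> (\<I> (q e d) \<odot> defect a b c d) \<cdot> (\<I> (q e d) \<odot> t d b a) \<cdot> (\<I> (q e d) \<odot> (t d c b \<odot> \<I> (q b a)))
           \<cdot> al (q e d) (T (q d c) (q c b)) (q b a) \<cdot> (al (q e d) (q d c) (q c b) \<odot> \<I> (q b a))"
proof -
  have ord: "0 < b" "0 < c" "0 < d" "a < c" "a < d" "a < e" "b < d" "b < e" "c < e"
    "b \<le> n" "c \<le> n" "d \<le> n" using idx by simp_all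
  note s = idx ord
  have nat1: "al (q e c) (q c b) (q b a) \<cdot> ((t e d c \<odot> \<I> (q c b)) \<odot> \<I> (q b a))
      = (t e d c \<odot> \<I> (T (q c b) (q b a))) \<cdot> al (T (q e d) (q d c)) (q c b) (q b a)"
    using al_natural[of "t e d c" "\<I> (q c b)" "\<I> (q b a)"] s by (simp add: ten_idt)
  have inter: "(\<I> (q e c) \<odot> t c b a) \<cdot> (t e d c \<odot> \<I> (T (q c b) (q b a)))
      = (t e d c \<odot> \<I> (q c a)) \<cdot> (\<I> (T (q e d) (q d c)) \<odot> t c b a)"
    using interchange[of "t e d c" "t c b a"] s by simp
  have nat2: "al (q e d) (q d c) (q c a) \<cdot> (\<I> (T (q e d) (q d c)) \<odot> t c b a)
      = (\<I> (q e d) \<odot> (\<I> (q d c) \<odot> t c b a)) \<cdot> al (q e d) (q d c) (T (q c b) (q b a))"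
    using al_natural[of "\<I> (q e d)" "\<I> (q d c)" "t c b a"] s by (simp add: ten_idt)
  have pent: "al (q e d) (q d c) (T (q c b) (q b a)) \<cdot> al (T (q e d) (q d c)) (q c b) (q b a)
      = (\<I> (q e d) \<odot> al (q d c) (q c b) (q b a)) \<cdot> al (q e d) (T (q d c) (q c b)) (q b a)
          \<cdot> (al (q e d) (q d c) (q c b) \<odot> \<I> (q b a))"
    using pentagon[of "q e d" "q d c" "q c b" "q b a"] s by simp
  have "defect a c d e \<cdot> defect a b c e \<cdot> t e b a \<cdot> (t e c b \<odot> \<I> (q b a)) \<cdot> ((t e d c \<odot> \<I> (q c b)) \<odot> \<I> (q b a))
      = defect a c d e \<cdot> t e c a \<cdot> (\<I> (q e c) \<odot> t c b a) \<cdot> al (q e c) (q c b) (q b a)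
          \<cdot> ((t e d c \<odot> \<I> (q c b)) \<odot> \<I> (q b a))"
    by (rule rewrite_in_context[OF defect_relation[OF idx(1-3) ord(9) idx(6), symmetric],
          where ctx = "\<lambda>x. defect a c d e \<cdot> x \<cdot> ((t e d c \<odot> \<I> (q c b)) \<odot> \<I> (q b a))"]) (simp_all add: s)
  also have "\<dots> = defect a c d e \<cdot> t e c a \<cdot> (\<I> (q e c) \<odot> t c b a) \<cdot> (t e d c \<odot> \<I> (T (q c b) (q b a)))
          \<cdot> al (T (q e d) (q d c)) (q c b) (q b a)"
    by (rule rewrite_in_context[OF nat1,
          where ctx = "\<lambda>x. defect a c d e \<cdot> t e c a \<cdot> (\<I> (q e c) \<odot> t c b a) \<cdot> x"]) (simp_all add: s)
  also have "\<dots> = defect a c d e \<cdot> t e c a \<cdot> (t e d c \<odot> \<I> (q c a)) \<cdot> (\<I> (T (q e d) (q d c)) \<odot> t c b a)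
          \<cdot> al (T (q e d) (q d c)) (q c b) (q b a)"
    by (rule rewrite_in_context[OF inter,
          where ctx = "\<lambda>x. defect a c d e \<cdot> t e c a \<cdot> x \<cdot> al (T (q e d) (q d c)) (q c b) (q b a)"]) (simp_all add: s)
  also have "\<dots> = t e d a \<cdot> (\<I> (q e d) \<odot> t d c a) \<cdot> al (q e d) (q d c) (q c a) \<cdot> (\<I> (T (q e d) (q d c)) \<odot> t c b a)
          \<cdot> al (T (q e d) (q d c)) (q c b) (q b a)"
    by (rule rewrite_in_context[OF defect_relation[OF idx(1) ord(4) idx(4-6), symmetric],
          where ctx = "\<lambda>x. x \<cdot> (\<I> (T (q e d) (q d c)) \<odot> t c b a) \<cdot> al (T (q e d) (q d c)) (q c b) (q b a)"])
      (simp_all add: s)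
  also have "\<dots> = t e d a \<cdot> (\<I> (q e d) \<odot> t d c a) \<cdot> (\<I> (q e d) \<odot> (\<I> (q d c) \<odot> t c b a))
          \<cdot> al (q e d) (q d c) (T (q c b) (q b a)) \<cdot> al (T (q e d) (q d c)) (q c b) (q b a)"
    by (rule rewrite_in_context[OF nat2,
          where ctx = "\<lambda>x. t e d a \<cdot> (\<I> (q e d) \<odot> t d c a) \<cdot> x \<cdot> al (T (q e d) (q d c)) (q c b) (q b a)"])
      (simp_all add: s)
  also have "\<dots> = t e d a \<cdot> (\<I> (q e d) \<odot> t d c a) \<cdot> (\<I> (q e d) \<odot> (\<I> (q d c) \<odot> t c b a))
          \<cdot> (\<I> (q e d) \<odot> al (q d c) (q c b) (q b a)) \<cdot> al (q e d) (T (q d c) (q c b)) (q b a)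
          \<cdot> (al (q e d) (q d c) (q c b) \<odot> \<I> (q b a))"
    by (rule rewrite_in_context[OF pent,
          where ctx = "\<lambda>x. t e d a \<cdot> (\<I> (q e d) \<odot> t d c a) \<cdot> (\<I> (q e d) \<odot> (\<I> (q d c) \<odot> t c b a)) \<cdot> x"])
      (simp_all add: s)
  also have "\<dots> = t e d a \<cdot> (\<I> (q e d) \<odot> defect a b c d) \<cdot> (\<I> (q e d) \<odot> t d b a) \<cdot> (\<I> (q e d) \<odot> (t d c b \<odot> \<I> (q b a)))
          \<cdot> al (q e d) (T (q d c) (q c b)) (q b a) \<cdot> (al (q e d) (q d c) (q c b) \<odot> \<I> (q b a))"
    by (rule rewrite_in_context[OF defect_relation_whisker_left[where X = "q e d", OF idx(1-4) ord(12)],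
          where ctx = "\<lambda>x. t e d a \<cdot> x \<cdot> al (q e d) (T (q d c) (q c b)) (q b a) \<cdot> (al (q e d) (q d c) (q c b) \<odot> \<I> (q b a))"])
      (simp_all add: s)
  finally show ?thesis .
qed

text \<open>Along the lower path the defects on \<open>{b,c,d,e}\<close> and \<open>{a,b,d,e}\<close> appear.\<close>
lemma pentagon_lower_path:
  assumes idx: "0 < a" "a < b" "b < c" "c < d" "d < e" "e \<le> n"
  shows "defect a b d e \<cdot> t e b a \<cdot> (defect b c d e \<odot> \<I> (q b a)) \<cdot> (t e c b \<odot> \<I> (q b a))
           \<cdot> ((t e d c \<odot> \<I> (q c b)) \<odot> \<I> (q b a))
       = t e d a \<cdot> (\<I> (q e d) \<odot> t d b a) \<cdot> (\<I> (q e d) \<odot> (t d c b \<odot> \<I> (q b a)))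
           \<cdot> al (q e d) (T (q d c) (q c b)) (q b a) \<cdot> (al (q e d) (q d c) (q c b) \<odot> \<I> (q b a))"
proof -
  have ord: "0 < b" "0 < c" "0 < d" "a < d" "a < e" "b < d" "b < e" "c < e"
    "b \<le> n" "c \<le> n" "d \<le> n" using idx by simp_all
  note s = idx ord
  have nat3: "al (q e d) (q d b) (q b a) \<cdot> ((\<I> (q e d) \<odot> t d c b) \<odot> \<I> (q b a))
      = (\<I> (q e d) \<odot> (t d c b \<odot> \<I> (q b a))) \<cdot> al (q e d) (T (q d c) (q c b)) (q b a)"
    using al_natural[of "\<I> (q e d)" "t d c b" "\<I> (q b a)"] s by simp
  have "defect a b d e \<cdot> t e b a \<cdot> (defect b c d e \<odot> \<I> (q b a)) \<cdot> (t e c b \<odot> \<I> (q b a))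
           \<cdot> ((t e d c \<odot> \<I> (q c b)) \<odot> \<I> (q b a))
      = defect a b d e \<cdot> t e b a \<cdot> (t e d b \<odot> \<I> (q b a)) \<cdot> ((\<I> (q e d) \<odot> t d c b) \<odot> \<I> (q b a))
           \<cdot> (al (q e d) (q d c) (q c b) \<odot> \<I> (q b a))"
    by (rule rewrite_in_context[OF defect_relation_whisker_right[where X = "q b a", OF ord(1) idx(3-6), symmetric],
          where ctx = "\<lambda>x. defect a b d e \<cdot> t e b a \<cdot> x"]) (simp_all add: s)
  also have "\<dots> = t e d a \<cdot> (\<I> (q e d) \<odot> t d b a) \<cdot> al (q e d) (q d b) (q b a)
           \<cdot> ((\<I> (q e d) \<odot> t d c b) \<odot> \<I> (q b a)) \<cdot> (al (q e d) (q d c) (q c b) \<odot> \<I> (q b a))"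
    by (rule rewrite_in_context[OF defect_relation[OF idx(1,2) ord(6) idx(5,6), symmetric],
          where ctx = "\<lambda>x. x \<cdot> ((\<I> (q e d) \<odot> t d c b) \<odot> \<I> (q b a)) \<cdot> (al (q e d) (q d c) (q c b) \<odot> \<I> (q b a))"])
      (simp_all add: s)
  also have "\<dots> = t e d a \<cdot> (\<I> (q e d) \<odot> t d b a) \<cdot> (\<I> (q e d) \<odot> (t d c b \<odot> \<I> (q b a)))
           \<cdot> al (q e d) (T (q d c) (q c b)) (q b a) \<cdot> (al (q e d) (q d c) (q c b) \<odot> \<I> (q b a))"
    by (rule rewrite_in_context[OF nat3,
          where ctx = "\<lambda>x. t e d a \<cdot> (\<I> (q e d) \<odot> t d b a) \<cdot> x \<cdot> (al (q e d) (q d c) (q c b) \<odot> \<I> (q b a))"])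
      (simp_all add: s)
  finally show ?thesis .
qed

text \<open>Both paths around the pentagon end with the same isomorphism \<open>\<Theta>\<close>, which is
  cancelled.\<close>
lemma defect_pentagon:
  assumes idx: "0 < a" "a < b" "b < c" "c < d" "d < e" "e \<le> n"
  shows "defect a c d e \<cdot> defect a b c e
       = (t e d a \<cdot> (\<I> (q e d) \<odot> defect a b c d) \<cdot> inverse_arr C (t e d a))
           \<cdot> defect a b d e \<cdot> t e b a \<cdot> (defect b c d e \<odot> \<I> (q b a)) \<cdot> inverse_arr C (t e b a)"
proof -
  have ord: "0 < b" "0 < c" "0 < d" "a < c" "a < d" "a < e" "b < d" "b < e" "c < e"
    "b \<le> n" "c \<le> n" "d \<le> n" using idx by simp_all
  note s = idx ord
  let ?\<Theta> = "t e b a \<cdot> (t e c b \<odot> \<I> (q b a)) \<cdot> ((t e d c \<odot> \<I> (q c b)) \<odot> \<I> (q b a))"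
  have \<Theta>_iso: "iso C ?\<Theta>"
    using s by (simp add: iso_comp iso_ten iso_idt)
  show ?thesis
  proof (rule cancel_right[OF \<Theta>_iso])
    have "((t e d a \<cdot> (\<I> (q e d) \<odot> defect a b c d) \<cdot> inverse_arr C (t e d a))
           \<cdot> defect a b d e \<cdot> t e b a \<cdot> (defect b c d e \<odot> \<I> (q b a)) \<cdot> inverse_arr C (t e b a)) \<cdot> ?\<Theta>
        = t e d a \<cdot> (\<I> (q e d) \<odot> defect a b c d) \<cdot> inverse_arr C (t e d a) \<cdot> defect a b d e \<cdot> t e b a
           \<cdot> (defect b c d e \<odot> \<I> (q b a)) \<cdot> (t e c b \<odot> \<I> (q b a)) \<cdot> ((t e d c \<odot> \<I> (q c b)) \<odot> \<I> (q b a))"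
      using s by (simp add: inv_comp_left_tail)
    also have "\<dots> = (defect a c d e \<cdot> defect a b c e) \<cdot> ?\<Theta>"
      using pentagon_lower_path[OF idx] pentagon_upper_path[OF idx] s by (simp add: inv_comp_left_tail)
    finally show "(defect a c d e \<cdot> defect a b c e) \<cdot> ?\<Theta>
        = ((t e d a \<cdot> (\<I> (q e d) \<odot> defect a b c d) \<cdot> inverse_arr C (t e d a))
           \<cdot> defect a b d e \<cdot> t e b a \<cdot> (defect b c d e \<odot> \<I> (q b a)) \<cdot> inverse_arr C (t e b a)) \<cdot> ?\<Theta>" ..
  qed (use s in simp_all)
qed

text \<open>If the five automorphisms of \<open>q e a\<close> built from the defects all coincide, the common
  value \<open>X\<close> satisfies \<open>X \<cdot> X = X \<cdot> X \<cdot> X\<close> by the pentagon relation, so \<open>X\<close> is an idempotent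
  automorphism, i.e. an identity.\<close>
lemma defect_trivial_if_coherent:
  assumes idx: "0 < a" "a < b" "b < c" "c < d" "d < e" "e \<le> n"
    and coh: "defect a b c e = defect a b d e" "defect a b d e = defect a c d e"
      "defect a c d e = t e b a \<cdot> (defect b c d e \<odot> \<I> (q b a)) \<cdot> inverse_arr C (t e b a)"
      "t e b a \<cdot> (defect b c d e \<odot> \<I> (q b a)) \<cdot> inverse_arr C (t e b a)
         = t e d a \<cdot> (\<I> (q e d) \<odot> defect a b c d) \<cdot> inverse_arr C (t e d a)"
  shows "defect a b c e = \<I> (q e a)"
proof -
  let ?X = "defect a b c e"
  have X: "iso C ?X" "?X \<in> Arr C" "Dom C ?X = q e a" "Cod C ?X = q e a"
    using idx by simp_all
  have "?X \<cdot> ?X = ?X \<cdot> ?X \<cdot> ?X"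
    using defect_pentagon[OF idx] coh by simp
  then have "?X \<cdot> ?X = ?X" using cancel_left[OF X(1), of ?X "?X \<cdot> ?X"] X by simp
  then show ?thesis using idempotent_iso_is_idt[OF X(1)] X by simp
qed

end

section \<open>Functors\<close>

locale functor_ctx = C: category_ctx C + D: category_ctx D for C D :: "('o, 'a) cat" +
  fixes Fo :: "'o \<Rightarrow> 'o" and Fa :: "'a \<Rightarrow> 'a"
  assumes fu: "functor C D Fo Fa"
begin

lemma fo_obj [simp]: "A \<in> Obj C \<Longrightarrow> Fo A \<in> Obj D"
  using fu unfolding functor_def by blast

lemma fa_arr [simp]: "f \<in> Arr C \<Longrightarrow> Fa f \<in> Arr D"
  using fu unfolding functor_def hom_def by blast

lemma fa_dom [simp]: "f \<in> Arr C \<Longrightarrow> Dom D (Fa f) = Fo (Dom C f)"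
  using fu unfolding functor_def hom_def by blast

lemma fa_cod [simp]: "f \<in> Arr C \<Longrightarrow> Cod D (Fa f) = Fo (Cod C f)"
  using fu unfolding functor_def hom_def by blast

lemma fa_idt: "A \<in> Obj C \<Longrightarrow> Fa (Idt C A) = Idt D (Fo A)"
  using fu unfolding functor_def by blast

lemma fa_comp:
  "f \<in> Arr C \<Longrightarrow> g \<in> Arr C \<Longrightarrow> Cod C f = Dom C g \<Longrightarrow> Fa (Comp C g f) = Comp D (Fa g) (Fa f)"
  using fu unfolding functor_def by blast

lemma fa_is_inverse:
  assumes f: "iso C f"
  shows "is_inverse D (Fa f) (Fa (inverse_arr C f))"
  using f C.iso_arr[OF f] by (simp add: is_inverse_def hom_def fa_comp[symmetric] fa_idt)

lemma fa_iso: "iso C f \<Longrightarrow> iso D (Fa f)"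
  using fa_is_inverse unfolding iso_def by blast

lemma fa_inverse: "iso C f \<Longrightarrow> Fa (inverse_arr C f) = inverse_arr D (Fa f)"
  using fa_is_inverse D.inverse_arr_is_inverse[OF fa_iso] D.inverse_unique by blast

lemma faithful_reflects_idt:
  assumes "faithful C Fa" and f: "f \<in> Arr C" "Dom C f = A" "Cod C f = A"
    and Ff: "Fa f = Idt D (Fo A)"
  shows "f = Idt C A"
proof -
  have A: "A \<in> Obj C" using f C.dom_obj by blast
  show ?thesis
    using assms(1) f A Ff fa_idt[OF A] unfolding faithful_def by (metis C.idt_arr C.idt_dom C.idt_cod)
qed

end

section \<open>Order-preserving embeddings\<close>

lemma sorted_list_of_set_3:
  "i < (j::nat) \<Longrightarrow> j < k \<Longrightarrow> sorted_list_of_set {i, j, k} = [i, j, k]"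
  by (rule sorted_distinct_set_unique) auto

lemma sorted_list_of_set_4:
  "a < (b::nat) \<Longrightarrow> b < c \<Longrightarrow> c < d \<Longrightarrow> sorted_list_of_set {a, b, c, d} = [a, b, c, d]"
  by (rule sorted_distinct_set_unique) auto

lemma ord_emb_3:
  "i < (j::nat) \<Longrightarrow> j < k \<Longrightarrow> ord_emb {i, j, k} 1 = i \<and> ord_emb {i, j, k} 2 = j \<and> ord_emb {i, j, k} 3 = k"
  by (simp add: ord_emb_def sorted_list_of_set_3)

lemma ord_emb_4:
  "a < (b::nat) \<Longrightarrow> b < c \<Longrightarrow> c < d \<Longrightarrow>
   ord_emb {a, b, c, d} 1 = a \<and> ord_emb {a, b, c, d} 2 = b \<and> ord_emb {a, b, c, d} 3 = c \<and> ord_emb {a, b, c, d} 4 = d"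
  by (simp add: ord_emb_def sorted_list_of_set_4)

section \<open>The system of categories \<open>\<C>\<^sub>2, \<dots>, \<C>\<^sub>5\<close>\<close>

locale theta_system =
  fixes \<Sigma> :: "('o, 'a) sys" and P :: 'o and \<theta> :: 'a
  assumes ax: "sys_axioms \<Sigma>"
    and P: "P \<in> Obj (Cat \<Sigma> 2)"
    and \<theta>_hom: "\<theta> \<in> hom (Cat \<Sigma> 3) (Ten \<Sigma> 3 (FO \<Sigma> 3 {2, 3} P) (FO \<Sigma> 3 {1, 2} P)) (FO \<Sigma> 3 {1, 3} P)"
    and \<theta>_iso: "iso (Cat \<Sigma> 3) \<theta>"
begin

lemma monoidal_cat: "m \<in> {2..5} \<Longrightarrow> monoidal_ctx (Cat \<Sigma> m) (Ten \<Sigma> m) (TenA \<Sigma> m) (Alpha \<Sigma> m)"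
  using ax unfolding sys_axioms_def monoidal_ctx_def category_ctx_def monoidal_ctx_axioms_def by blast

lemma emb_functor:
  assumes m: "m \<in> {3..5}" and S: "valid_emb m S"
  shows "functor_ctx (Cat \<Sigma> (card S)) (Cat \<Sigma> m) (FO \<Sigma> m S) (FA \<Sigma> m S)"
proof -
  have "card S \<in> {2..5}" using m S by (auto simp: valid_emb_def)
  then show ?thesis
    using ax m S monoidal_cat[of "card S"] monoidal_cat[of m]
    unfolding sys_axioms_def functor_ctx_def functor_ctx_axioms_def monoidal_ctx_def by auto
qed

lemma emb_faithful: "m \<in> {3..5} \<Longrightarrow> valid_emb m S \<Longrightarrow> faithful (Cat \<Sigma> (card S)) (FA \<Sigma> m S)"
  using ax unfolding sys_axioms_def by blast

lemma emb_strict: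
  "m \<in> {3..5} \<Longrightarrow> valid_emb m S \<Longrightarrow>
   strict_monoidal (Cat \<Sigma> (card S)) (Ten \<Sigma> (card S)) (TenA \<Sigma> (card S)) (Alpha \<Sigma> (card S))
     (Ten \<Sigma> m) (TenA \<Sigma> m) (Alpha \<Sigma> m) (FO \<Sigma> m S) (FA \<Sigma> m S)"
  using ax unfolding sys_axioms_def by blast

lemma emb_compose_obj:
  "m \<in> {3..5} \<Longrightarrow> valid_emb m T \<Longrightarrow> valid_emb (card T) S \<Longrightarrow> A \<in> Obj (Cat \<Sigma> (card S)) \<Longrightarrow>
   FO \<Sigma> m T (FO \<Sigma> (card T) S A) = FO \<Sigma> m (ord_emb T ` S) A"
  using ax unfolding sys_axioms_def by auto

lemma emb_compose_arr:
  "m \<in> {3..5} \<Longrightarrow> valid_emb m T \<Longrightarrow> valid_emb (card T) S \<Longrightarrow> f \<in> Arr (Cat \<Sigma> (card S)) \<Longrightarrow>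
   FA \<Sigma> m T (FA \<Sigma> (card T) S f) = FA \<Sigma> m (ord_emb T ` S) f"
  using ax unfolding sys_axioms_def by auto

lemma pair_obj:
  assumes m: "m \<in> {3..5}" and ij: "0 < i" "i < j" "j \<le> m"
  shows "FO \<Sigma> m {i, j} P \<in> Obj (Cat \<Sigma> m)"
proof -
  have c: "card {i, j} = 2" using ij by simp
  have v: "valid_emb m {i, j}" using m ij c by (auto simp: valid_emb_def)
  interpret functor_ctx "Cat \<Sigma> 2" "Cat \<Sigma> m" "FO \<Sigma> m {i, j}" "FA \<Sigma> m {i, j}"
    using emb_functor[OF m v] c by simp
  show ?thesis using P by simp
qed

text \<open>\<open>\<theta>\<^sub>k\<^sub>j\<^sub>i : P\<^sub>k\<^sub>j \<otimes> P\<^sub>j\<^sub>i \<rightarrow> P\<^sub>k\<^sub>i\<close> is an isomorphism of \<open>\<C>\<^sub>m\<close>, \<open>m \<in> {4, 5}\<close>: the embedding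
  \<open>{1,2,3} \<rightarrow> {i,j,k}\<close> sends \<open>P\<^sub>3\<^sub>2, P\<^sub>2\<^sub>1, P\<^sub>3\<^sub>1\<close> to \<open>P\<^sub>k\<^sub>j, P\<^sub>j\<^sub>i, P\<^sub>k\<^sub>i\<close>.\<close>
lemma theta_typing:
  assumes m: "m \<in> {4, 5}" and ijk: "0 < i" "i < j" "j < k" "k \<le> m"
  shows "FA \<Sigma> m {i, j, k} \<theta> \<in> hom (Cat \<Sigma> m) (Ten \<Sigma> m (FO \<Sigma> m {j, k} P) (FO \<Sigma> m {i, j} P)) (FO \<Sigma> m {i, k} P)"
    and "iso (Cat \<Sigma> m) (FA \<Sigma> m {i, j, k} \<theta>)"
proof -
  have m3: "m \<in> {3..5}" using m by auto
  have c: "card {i, j, k} = 3" using ijk by simp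
  have v: "valid_emb m {i, j, k}" using ijk c m by (auto simp: valid_emb_def)
  interpret F: functor_ctx "Cat \<Sigma> 3" "Cat \<Sigma> m" "FO \<Sigma> m {i, j, k}" "FA \<Sigma> m {i, j, k}"
    using emb_functor[OF m3 v] c by simp
  have oe: "ord_emb {i, j, k} 1 = i" "ord_emb {i, j, k} 2 = j" "ord_emb {i, j, k} 3 = k"
    using ord_emb_3[OF ijk(2,3)] by simp_all
  have pair: "FO \<Sigma> m {i, j, k} (FO \<Sigma> 3 {x, y} P) = FO \<Sigma> m {ord_emb {i, j, k} x, ord_emb {i, j, k} y} P"
    if "0 < x" "x < y" "y \<le> 3" for x y
  proof -
    have "valid_emb 3 {x, y}" "card {x, y} = 2" using that by (auto simp: valid_emb_def)
    then show ?thesis using emb_compose_obj[OF m3 v, of "{x, y}" P] c P by simp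
  qed
  have obj3: "FO \<Sigma> 3 {2, 3} P \<in> Obj (Cat \<Sigma> 3)" "FO \<Sigma> 3 {1, 2} P \<in> Obj (Cat \<Sigma> 3)"
    by (rule pair_obj; simp)+
  have "FO \<Sigma> m {i, j, k} (Ten \<Sigma> 3 (FO \<Sigma> 3 {2, 3} P) (FO \<Sigma> 3 {1, 2} P))
      = Ten \<Sigma> m (FO \<Sigma> m {i, j, k} (FO \<Sigma> 3 {2, 3} P)) (FO \<Sigma> m {i, j, k} (FO \<Sigma> 3 {1, 2} P))"
    using emb_strict[OF m3 v] c obj3 unfolding strict_monoidal_def by simp
  then show "FA \<Sigma> m {i, j, k} \<theta> \<in> hom (Cat \<Sigma> m) (Ten \<Sigma> m (FO \<Sigma> m {j, k} P) (FO \<Sigma> m {i, j} P)) (FO \<Sigma> m {i, k} P)"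
    using \<theta>_hom pair[of 2 3] pair[of 1 2] pair[of 1 3] oe by (simp add: hom_def)
  show "iso (Cat \<Sigma> m) (FA \<Sigma> m {i, j, k} \<theta>)" using F.fa_iso[OF \<theta>_iso] .
qed

lemma theta_family_at:
  assumes m: "m \<in> {4, 5}"
  shows "theta_family (Cat \<Sigma> m) (Ten \<Sigma> m) (TenA \<Sigma> m) (Alpha \<Sigma> m) m
           (\<lambda>j i. FO \<Sigma> m {i, j} P) (\<lambda>k j i. FA \<Sigma> m {i, j, k} \<theta>)"
  using m monoidal_cat[of m] pair_obj[of m] theta_typing[OF m]
  unfolding theta_family_def theta_family_axioms_def by auto

end

sublocale theta_system \<subseteq> F4: theta_family "Cat \<Sigma> 4" "Ten \<Sigma> 4" "TenA \<Sigma> 4" "Alpha \<Sigma> 4" 4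
    "\<lambda>j i. FO \<Sigma> 4 {i, j} P" "\<lambda>k j i. FA \<Sigma> 4 {i, j, k} \<theta>"
  by (rule theta_family_at) simp

sublocale theta_system \<subseteq> F5: theta_family "Cat \<Sigma> 5" "Ten \<Sigma> 5" "TenA \<Sigma> 5" "Alpha \<Sigma> 5" 5
    "\<lambda>j i. FO \<Sigma> 5 {i, j} P" "\<lambda>k j i. FA \<Sigma> 5 {i, j, k} \<theta>"
  by (rule theta_family_at) simp

context theta_system
begin

text \<open>Index sets are written with numerals, so \<open>1\<close> must not be unfolded to \<open>Suc 0\<close>.\<close>
declare One_nat_def [simp del]

lemma C_is_defect: "Cmor \<Sigma> P \<theta> = F4.defect 1 2 3 4"
  by (simp add: Cmor_def Let_def thm_img_def Pobj_def F4.defect_def)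

text \<open>Its image \<open>C\<^sub>S\<close> under the embedding with image \<open>S = {a, b, c, d}\<close> is the defect on \<open>S\<close> in
  \<open>\<C>\<^sub>5\<close>, since the embedding is strict monoidal and sends \<open>P\<^sub>j\<^sub>i, \<theta>\<^sub>k\<^sub>j\<^sub>i\<close> to the corresponding data on \<open>S\<close>.\<close>
lemma image_of_C:
  assumes abcd: "0 < a" "a < b" "b < c" "c < d" "d \<le> 5"
  shows "FA \<Sigma> 5 {a, b, c, d} (Cmor \<Sigma> P \<theta>) = F5.defect a b c d"
proof -
  define S where "S = {a, b, c, d}"
  have m5: "(5::nat) \<in> {3..5}" by simp
  have cS: "card S = 4" unfolding S_def using abcd by simp
  have v: "valid_emb 5 S" using abcd cS unfolding S_def by (auto simp: valid_emb_def)
  have oe: "ord_emb S 1 = a" "ord_emb S 2 = b" "ord_emb S 3 = c" "ord_emb S 4 = d"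
    unfolding S_def using ord_emb_4[OF abcd(2-4)] by simp_all
  interpret F: functor_ctx "Cat \<Sigma> 4" "Cat \<Sigma> 5" "FO \<Sigma> 5 S" "FA \<Sigma> 5 S"
    using emb_functor[OF m5 v] cS by simp
  have strict: "strict_monoidal (Cat \<Sigma> 4) (Ten \<Sigma> 4) (TenA \<Sigma> 4) (Alpha \<Sigma> 4)
      (Ten \<Sigma> 5) (TenA \<Sigma> 5) (Alpha \<Sigma> 5) (FO \<Sigma> 5 S) (FA \<Sigma> 5 S)"
    using emb_strict[OF m5 v] cS by simp
  have F_ten: "FA \<Sigma> 5 S (TenA \<Sigma> 4 f g) = TenA \<Sigma> 5 (FA \<Sigma> 5 S f) (FA \<Sigma> 5 S g)"
    if "f \<in> Arr (Cat \<Sigma> 4)" "g \<in> Arr (Cat \<Sigma> 4)" for f g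
    using strict that unfolding strict_monoidal_def by blast
  have F_al: "FA \<Sigma> 5 S (Alpha \<Sigma> 4 A B D) = Alpha \<Sigma> 5 (FO \<Sigma> 5 S A) (FO \<Sigma> 5 S B) (FO \<Sigma> 5 S D)"
    if "A \<in> Obj (Cat \<Sigma> 4)" "B \<in> Obj (Cat \<Sigma> 4)" "D \<in> Obj (Cat \<Sigma> 4)" for A B D
    using strict that unfolding strict_monoidal_def by blast
  have F_P: "FO \<Sigma> 5 S (FO \<Sigma> 4 {i, j} P) = FO \<Sigma> 5 {ord_emb S i, ord_emb S j} P"
    if "0 < i" "i < j" "j \<le> 4" for i j
  proof -
    have "valid_emb 4 {i, j}" "card {i, j} = 2" using that by (auto simp: valid_emb_def)
    then show ?thesis using emb_compose_obj[OF m5 v, of "{i, j}" P] cS P by simp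
  qed
  have F_\<theta>: "FA \<Sigma> 5 S (FA \<Sigma> 4 {i, j, k} \<theta>) = FA \<Sigma> 5 {ord_emb S i, ord_emb S j, ord_emb S k} \<theta>"
    if "0 < i" "i < j" "j < k" "k \<le> 4" for i j k
  proof -
    have "valid_emb 4 {i, j, k}" "card {i, j, k} = 3" using that by (auto simp: valid_emb_def)
    then show ?thesis using emb_compose_arr[OF m5 v, of "{i, j, k}" \<theta>] cS \<theta>_hom by (simp add: hom_def)
  qed
  show ?thesis
    unfolding C_is_defect F4.defect_def F5.defect_def S_def[symmetric]
    by (simp add: F.fa_comp F.fa_idt F.fa_inverse F4.iso_ten F4.iso_idt F_ten F_al F_P F_\<theta> oe)
qed

lemma C_trivial_if_image_trivial:
  assumes triv: "FA \<Sigma> 5 {1, 2, 3, 5} (Cmor \<Sigma> P \<theta>) = Idt (Cat \<Sigma> 5) (FO \<Sigma> 5 {1, 5} P)"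
  shows "Cmor \<Sigma> P \<theta> = Idt (Cat \<Sigma> 4) (Pobj \<Sigma> P 4 4 1)"
proof -
  have m5: "(5::nat) \<in> {3..5}" and cS: "card {1, 2, 3, 5::nat} = 4" by simp_all
  have v: "valid_emb 5 {1, 2, 3, 5}" by (simp add: valid_emb_def)
  interpret F: functor_ctx "Cat \<Sigma> 4" "Cat \<Sigma> 5" "FO \<Sigma> 5 {1, 2, 3, 5}" "FA \<Sigma> 5 {1, 2, 3, 5}"
    using emb_functor[OF m5 v] cS by simp
  have C_typing: "Cmor \<Sigma> P \<theta> \<in> Arr (Cat \<Sigma> 4)" "Dom (Cat \<Sigma> 4) (Cmor \<Sigma> P \<theta>) = FO \<Sigma> 4 {1, 4} P"
    "Cod (Cat \<Sigma> 4) (Cmor \<Sigma> P \<theta>) = FO \<Sigma> 4 {1, 4} P"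
    unfolding C_is_defect by simp_all
  have "FO \<Sigma> 5 {1, 2, 3, 5} (FO \<Sigma> 4 {1, 4} P) = FO \<Sigma> 5 {1, 5} P"
    using F.fa_dom[OF C_typing(1)] C_typing(2) triv image_of_C[of 1 2 3 5] by simp
  then show ?thesis
    using F.faithful_reflects_idt[OF _ C_typing] emb_faithful[OF m5 v] cS triv
    by (simp add: Pobj_def)
qed

end

theorem mainTheorem2:
  fixes \<Sigma> :: "('o, 'a) sys" and P :: 'o and \<theta> :: 'a
  assumes ax: "sys_axioms \<Sigma>"
    and P: "P \<in> Obj (Cat \<Sigma> 2)"
    and \<theta>_hom: "\<theta> \<in> hom (Cat \<Sigma> 3) (Ten \<Sigma> 3 (FO \<Sigma> 3 {2, 3} P) (FO \<Sigma> 3 {1, 2} P)) (FO \<Sigma> 3 {1, 3} P)"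
    and \<theta>_iso: "iso (Cat \<Sigma> 3) \<theta>"
    and hyp: "let C5 = Cat \<Sigma> 5; c = Comp C5; t = TenA \<Sigma> 5; th = thm_img \<Sigma> \<theta> 5;
                  p = Pobj \<Sigma> P 5; CS = (\<lambda>S. FA \<Sigma> 5 S (Cmor \<Sigma> P \<theta>));
                  X1 = CS {1, 2, 3, 5}; X2 = CS {1, 2, 4, 5}; X3 = CS {1, 3, 4, 5};
                  X4 = c (th 5 2 1) (c (t (CS {2, 3, 4, 5}) (Idt C5 (p 2 1))) (inverse_arr C5 (th 5 2 1)));
                  X5 = c (th 5 4 1) (c (t (Idt C5 (p 5 4)) (CS {1, 2, 3, 4})) (inverse_arr C5 (th 5 4 1)))
              in X1 = X2 \<and> X2 = X3 \<and> X3 = X4 \<and> X4 = X5"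
  shows "Cmor \<Sigma> P \<theta> = Idt (Cat \<Sigma> 4) (Pobj \<Sigma> P 4 4 1)"
proof -
  interpret theta_system \<Sigma> P \<theta>
    using ax P \<theta>_hom \<theta>_iso by (rule theta_system.intro)
  have coherent:
    "F5.defect 1 2 3 5 = F5.defect 1 2 4 5" "F5.defect 1 2 4 5 = F5.defect 1 3 4 5"
    "F5.defect 1 3 4 5 = Comp (Cat \<Sigma> 5) (FA \<Sigma> 5 {1, 2, 5} \<theta>)
       (Comp (Cat \<Sigma> 5) (TenA \<Sigma> 5 (F5.defect 2 3 4 5) (Idt (Cat \<Sigma> 5) (FO \<Sigma> 5 {1, 2} P)))
         (inverse_arr (Cat \<Sigma> 5) (FA \<Sigma> 5 {1, 2, 5} \<theta>)))"
    "Comp (Cat \<Sigma> 5) (FA \<Sigma> 5 {1, 2, 5} \<theta>)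
       (Comp (Cat \<Sigma> 5) (TenA \<Sigma> 5 (F5.defect 2 3 4 5) (Idt (Cat \<Sigma> 5) (FO \<Sigma> 5 {1, 2} P)))
         (inverse_arr (Cat \<Sigma> 5) (FA \<Sigma> 5 {1, 2, 5} \<theta>)))
     = Comp (Cat \<Sigma> 5) (FA \<Sigma> 5 {1, 4, 5} \<theta>)
       (Comp (Cat \<Sigma> 5) (TenA \<Sigma> 5 (Idt (Cat \<Sigma> 5) (FO \<Sigma> 5 {4, 5} P)) (F5.defect 1 2 3 4))
         (inverse_arr (Cat \<Sigma> 5) (FA \<Sigma> 5 {1, 4, 5} \<theta>)))"
    using hyp by (simp_all add: Let_def thm_img_def Pobj_def image_of_C del: One_nat_def)
  have "F5.defect 1 2 3 5 = Idt (Cat \<Sigma> 5) (FO \<Sigma> 5 {1, 5} P)"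
    using F5.defect_trivial_if_coherent[of 1 2 3 4 5] coherent by simp
  then show ?thesis
    using C_trivial_if_image_trivial image_of_C[of 1 2 3 5] by simp
qed

end
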